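(* Let $A=\{(x_k,y_k):k\in[\ell]\}\subset\mathbb N^d$, $d=m+n$, where $\mathbb N$ denotes the non-negative integers, and let $T$ be any of the four sets $T_{\mathbb Q_\infty,V}(A)$, $T_{\mathbb Q_\infty,C}(A)$, $T_{\mathbb Q_{-\infty},V}(A)$, $T_{\mathbb Q_{-\infty},C}(A)$. Then for all $\bar k\in[\ell]$, $$\mathbb D_{\mathrm{in}}(x_{\bar k},y_{\bar k},T)\in\mathbb N\quad\text{and}\quad\mathbb D_{\mathrm{out}}(x_{\bar k},y_{\bar k},T)\in\mathbb N.$$
   Context: $[\ell]=\{1,\dots,\ell\}$; $1\!\!1$ denotes a vector of ones; $\vee,\wedge$ are componentwise max and min. Tropical technologies: $T_{\mathbb Q_\infty,V}(A)=\{(x,y)\in\mathbb{R}_+^d: x\ge\bigvee_k(t_k1\!\!1_m+x_k),\ y\le\bigvee_k(t_k1\!\!1_n+y_k),\ \max_k t_k=0,\ t\in(\mathbb{R}\cup\{-\infty\})^\ell\}$; $T_{\mathbb Q_\infty,C}(A)$: same without the constraint $\max_k t_k=0$; $T_{\mathbb Q_{-\infty},V}(A)=\{(x,y)\in\mathbb{R}_+^d: x\ge\bigwedge_k(t_k1\!\!1_m+x_k),\ y\le\bigwedge_k(t_k1\!\!1_n+y_k),\ \min_k t_k=0,\ t\in(\mathbb{R}\cup\{+\infty\})^\ell\}$; $T_{\mathbb Q_{-\infty},C}(A)$: same without the constraint $\min_k t_k=0$. Translation distance functions: $\mathbb D_{\mathrm{in}}(x,y,T)=\sup\{\delta\in\mathbb{R}:(x-\delta1\!\!1_m,y)\in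 T\}$, $\mathbb D_{\mathrm{out}}(x,y,T)=\sup\{\delta\in\mathbb{R}:(x,y+\delta1\!\!1_n)\in T\}$. *)

theory Defs
  imports "HOL-Library.Extended_Real"
begin

text \<open>Points of R^d = R^m x R^n are pairs of functions (x, y) :: (nat => real) x (nat => real);
  only the coordinates i < m of x and j < n of y are relevant.
  The data set A is given by X k, Y k for k in {1..l}.
  Tropical coefficient vectors t range over R \<union> {-\<infinity>} (resp. R \<union> {+\<infinity>}),
  encoded as ereal-valued functions excluding +\<infinity> (resp. -\<infinity>).\<close>

definition trop_max_tech :: "bool \<Rightarrow> nat \<Rightarrow> nat \<Rightarrow> nat \<Rightarrow> (nat \<Rightarrow> nat \<Rightarrow> real)
    \<Rightarrow> (nat \<Rightarrow> nat \<Rightarrow> real) \<Rightarrow> ((nat \<Rightarrow> real) \<times> (nat \<Rightarrow> real)) set" where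
  "trop_max_tech vrs m n l X Y =
    {(x, y). (\<forall>i<m. 0 \<le> x i) \<and> (\<forall>j<n. 0 \<le> y j) \<and>
      (\<exists>t :: nat \<Rightarrow> ereal. (\<forall>k\<in>{1..l}. t k \<noteq> \<infinity>) \<and>
         (vrs \<longrightarrow> (MAX k\<in>{1..l}. t k) = 0) \<and>
         (\<forall>i<m. (MAX k\<in>{1..l}. t k + ereal (X k i)) \<le> ereal (x i)) \<and>
         (\<forall>j<n. ereal (y j) \<le> (MAX k\<in>{1..l}. t k + ereal (Y k j))))}"

definition trop_min_tech :: "bool \<Rightarrow> nat \<Rightarrow> nat \<Rightarrow> nat \<Rightarrow> (nat \<Rightarrow> nat \<Rightarrow> real)
    \<Rightarrow> (nat \<Rightarrow> nat \<Rightarrow> real) \<Rightarrow> ((nat \<Rightarrow> real) \<times> (nat \<Rightarrow> real)) set" where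
  "trop_min_tech vrs m n l X Y =
    {(x, y). (\<forall>i<m. 0 \<le> x i) \<and> (\<forall>j<n. 0 \<le> y j) \<and>
      (\<exists>t :: nat \<Rightarrow> ereal. (\<forall>k\<in>{1..l}. t k \<noteq> -\<infinity>) \<and>
         (vrs \<longrightarrow> (MIN k\<in>{1..l}. t k) = 0) \<and>
         (\<forall>i<m. (MIN k\<in>{1..l}. t k + ereal (X k i)) \<le> ereal (x i)) \<and>
         (\<forall>j<n. ereal (y j) \<le> (MIN k\<in>{1..l}. t k + ereal (Y k j))))}"

abbreviation "T_max_V \<equiv> trop_max_tech True"
abbreviation "T_max_C \<equiv> trop_max_tech False"
abbreviation "T_min_V \<equiv> trop_min_tech True"
abbreviation "T_min_C \<equiv> trop_min_tech False"

definition D_in :: "((nat \<Rightarrow> real) \<times> (nat \<Rightarrow> real)) set \<Rightarrow> (nat \<Rightarrow> real) \<Rightarrow> (nat \<Rightarrow> real) \<Rightarrow> ereal" where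
  "D_in T x y = Sup {ereal \<delta> | \<delta>. ((\<lambda>i. x i - \<delta>), y) \<in> T}"

definition D_out :: "((nat \<Rightarrow> real) \<times> (nat \<Rightarrow> real)) set \<Rightarrow> (nat \<Rightarrow> real) \<Rightarrow> (nat \<Rightarrow> real) \<Rightarrow> ereal" where
  "D_out T x y = Sup {ereal \<delta> | \<delta>. (x, (\<lambda>j. y j + \<delta>)) \<in> T}"

end

theory Submission imports Defs begin

text \<open>A monotone rounding of the reals that commutes with integer translations (floor or
  ceiling) maps each of the four technologies into itself, coordinatewise: rounding the
  coefficients t_k commutes with the tropical sums of the integer data. Translating a data point
  by \<delta> and then rounding inputs down, resp. outputs up, yields its translation by
  \<lceil>\<delta>\<rceil>. So the set of feasible translations contains 0, is bounded above, and is
  closed under \<lceil>_\<rceil>; hence its supremum is a natural number.\<close>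

definition integer_rounding :: "(real \<Rightarrow> real) \<Rightarrow> bool" where
  "integer_rounding r \<longleftrightarrow> mono r \<and> r 0 = 0 \<and> (\<forall>a c. c \<in> \<int> \<longrightarrow> r (a + c) = r a + c)"

lemma integer_rounding_floor: "integer_rounding (\<lambda>a. of_int \<lfloor>a\<rfloor>)"
  unfolding integer_rounding_def by (auto intro!: monoI floor_mono elim!: Ints_cases)

lemma integer_rounding_ceiling: "integer_rounding (\<lambda>a. of_int \<lceil>a\<rceil>)"
  unfolding integer_rounding_def by (auto intro!: monoI ceiling_mono elim!: Ints_cases)

lemma integer_rounding_nonneg: "integer_rounding r \<Longrightarrow> 0 \<le> a \<Longrightarrow> 0 \<le> r a"
  unfolding integer_rounding_def by (metis monoD)

lemma floor_int_diff:
  assumes "(z::real) \<in> \<int>" shows "of_int \<lfloor>z - d\<rfloor> = z - of_int \<lceil>d\<rceil>"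
  using assms
proof (induct rule: Ints_induct)
  case (of_int a)
  have "\<lfloor>of_int a - d\<rfloor> = - \<lceil>d - of_int a\<rceil>" by (metis floor_minus minus_diff_eq)
  then show ?case by simp
qed

lemma ceiling_int_add:
  assumes "(z::real) \<in> \<int>" shows "of_int \<lceil>z + d\<rceil> = z + of_int \<lceil>d\<rceil>"
  using assms by (auto elim!: Ints_cases simp: add.commute)

definition ereal_lift :: "(real \<Rightarrow> real) \<Rightarrow> ereal \<Rightarrow> ereal" where
  "ereal_lift r a = (case a of ereal x \<Rightarrow> ereal (r x) | PInfty \<Rightarrow> \<infinity> | MInfty \<Rightarrow> -\<infinity>)"

lemma ereal_lift_simps [simp]:
  "ereal_lift r (ereal x) = ereal (r x)" "ereal_lift r \<infinity> = \<infinity>" "ereal_lift r (-\<infinity>) = -\<infinity>"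
  by (simp_all add: ereal_lift_def)

lemma ereal_lift_eq_infinity_iff [simp]:
  "ereal_lift r a = \<infinity> \<longleftrightarrow> a = \<infinity>" "ereal_lift r a = -\<infinity> \<longleftrightarrow> a = -\<infinity>"
  by (cases a; simp)+

lemma mono_ereal_lift: "mono r \<Longrightarrow> mono (ereal_lift r)"
proof (rule monoI)
  fix a b :: ereal assume "mono r" "a \<le> b" then show "ereal_lift r a \<le> ereal_lift r b"
    by (cases a; cases b) (auto dest: monoD)
qed

lemma ereal_lift_zero: "integer_rounding r \<Longrightarrow> ereal_lift r 0 = 0"
  by (simp add: integer_rounding_def zero_ereal_def)

lemma ereal_lift_add_int:
  "integer_rounding r \<Longrightarrow> c \<in> \<int> \<Longrightarrow> ereal_lift r (a + ereal c) = ereal_lift r a + ereal c"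
  by (cases a) (simp_all add: integer_rounding_def)

lemma ereal_lift_agg_shift:
  fixes agg :: "ereal set \<Rightarrow> ereal"
  assumes commute: "\<And>f A. mono f \<Longrightarrow> finite A \<Longrightarrow> A \<noteq> {} \<Longrightarrow> f (agg A) = agg (f ` A)"
    and r: "integer_rounding r" and K: "finite K" "K \<noteq> {}" and c: "\<forall>k\<in>K. c k \<in> \<int>"
  shows "ereal_lift r (agg ((\<lambda>k. t k + ereal (c k)) ` K)) =
    agg ((\<lambda>k. ereal_lift r (t k) + ereal (c k)) ` K)"
proof -
  have "ereal_lift r (agg ((\<lambda>k. t k + ereal (c k)) ` K)) =
      agg (ereal_lift r ` (\<lambda>k. t k + ereal (c k)) ` K)"
    using r K by (intro commute mono_ereal_lift) (auto simp: integer_rounding_def)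
  also have "\<dots> = agg ((\<lambda>k. ereal_lift r (t k) + ereal (c k)) ` K)"
    unfolding image_image using c
    by (intro arg_cong[where f = agg] image_cong ereal_lift_add_int[OF r]) auto
  finally show ?thesis .
qed

lemma ereal_lift_Max_shift:
  "integer_rounding r \<Longrightarrow> finite K \<Longrightarrow> K \<noteq> {} \<Longrightarrow> \<forall>k\<in>K. c k \<in> \<int> \<Longrightarrow>
    ereal_lift r (MAX k\<in>K. t k + ereal (c k)) = (MAX k\<in>K. ereal_lift r (t k) + ereal (c k))"
  by (rule ereal_lift_agg_shift) (auto intro: mono_Max_commute)

lemma ereal_lift_Min_shift:
  "integer_rounding r \<Longrightarrow> finite K \<Longrightarrow> K \<noteq> {} \<Longrightarrow> \<forall>k\<in>K. c k \<in> \<int> \<Longrightarrow>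
    ereal_lift r (MIN k\<in>K. t k + ereal (c k)) = (MIN k\<in>K. ereal_lift r (t k) + ereal (c k))"
  by (rule ereal_lift_agg_shift) (auto intro: mono_Min_commute)

definition rounding_closed :: "nat \<Rightarrow> nat \<Rightarrow> ((nat \<Rightarrow> real) \<times> (nat \<Rightarrow> real)) set \<Rightarrow> bool" where
  "rounding_closed m n T \<longleftrightarrow> (\<forall>r x y x' y'. integer_rounding r \<and> (x, y) \<in> T \<and>
     (\<forall>i<m. x' i = r (x i)) \<and> (\<forall>j<n. y' j = r (y j)) \<longrightarrow> (x', y') \<in> T)"

lemma rounding_closedD:
  assumes "rounding_closed m n T" "integer_rounding r" "(x, y) \<in> T"
    and "\<And>i. i < m \<Longrightarrow> x' i = r (x i)" "\<And>j. j < n \<Longrightarrow> y' j = r (y j)"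
  shows "(x', y') \<in> T"
  using assms unfolding rounding_closed_def by blast

lemma rounding_closed_trop_max_tech:
  assumes l: "1 \<le> l"
    and X: "\<forall>k\<in>{1..l}. \<forall>i<m. X k i \<in> \<int>" and Y: "\<forall>k\<in>{1..l}. \<forall>j<n. Y k j \<in> \<int>"
  shows "rounding_closed m n (trop_max_tech vrs m n l X Y)"
  unfolding rounding_closed_def
proof (intro allI impI, elim conjE)
  fix r x y x' y'
  assume r: "integer_rounding r" and x': "\<forall>i<m. x' i = r (x i)" and y': "\<forall>j<n. y' j = r (y j)"
    and "(x, y) \<in> trop_max_tech vrs m n l X Y"
  then obtain t where x: "\<forall>i<m. 0 \<le> x i" and y: "\<forall>j<n. 0 \<le> y j"
    and t: "\<forall>k\<in>{1..l}. t k \<noteq> \<infinity>" and vrs: "vrs \<longrightarrow> (MAX k\<in>{1..l}. t k) = 0"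
    and tx: "\<forall>i<m. (MAX k\<in>{1..l}. t k + ereal (X k i)) \<le> ereal (x i)"
    and ty: "\<forall>j<n. ereal (y j) \<le> (MAX k\<in>{1..l}. t k + ereal (Y k j))"
    unfolding trop_max_tech_def by auto
  let ?\<rho> = "ereal_lift r"
  have K: "finite {1..l}" "{1..l} \<noteq> {}" using l by auto
  have mono: "mono ?\<rho>" using r by (simp add: integer_rounding_def mono_ereal_lift)
  have "vrs \<longrightarrow> (MAX k\<in>{1..l}. ?\<rho> (t k)) = 0"
    using vrs mono_Max_commute[OF mono, of "t ` {1..l}"] K
    by (auto simp: image_image ereal_lift_zero[OF r])
  moreover have "(MAX k\<in>{1..l}. ?\<rho> (t k) + ereal (X k i)) \<le> ereal (x' i)" if "i < m" for i
  proof -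
    have "(MAX k\<in>{1..l}. ?\<rho> (t k) + ereal (X k i)) = ?\<rho> (MAX k\<in>{1..l}. t k + ereal (X k i))"
      using ereal_lift_Max_shift[OF r K] X that by simp
    also have "\<dots> \<le> ?\<rho> (ereal (x i))" using monoD[OF mono tx[rule_format, OF that]] by simp
    finally show ?thesis using x' that by simp
  qed
  moreover have "ereal (y' j) \<le> (MAX k\<in>{1..l}. ?\<rho> (t k) + ereal (Y k j))" if "j < n" for j
  proof -
    have "ereal (y' j) = ?\<rho> (ereal (y j))" using y' that by simp
    also have "\<dots> \<le> ?\<rho> (MAX k\<in>{1..l}. t k + ereal (Y k j))"
      using monoD[OF mono ty[rule_format, OF that]] .
    also have "\<dots> = (MAX k\<in>{1..l}. ?\<rho> (t k) + ereal (Y k j))"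
      using ereal_lift_Max_shift[OF r K] Y that by simp
    finally show ?thesis .
  qed
  ultimately show "(x', y') \<in> trop_max_tech vrs m n l X Y"
    using x y x' y' t integer_rounding_nonneg[OF r] unfolding trop_max_tech_def
    by (auto intro!: exI[of _ "\<lambda>k. ?\<rho> (t k)"])
qed

lemma rounding_closed_trop_min_tech:
  assumes l: "1 \<le> l"
    and X: "\<forall>k\<in>{1..l}. \<forall>i<m. X k i \<in> \<int>" and Y: "\<forall>k\<in>{1..l}. \<forall>j<n. Y k j \<in> \<int>"
  shows "rounding_closed m n (trop_min_tech vrs m n l X Y)"
  unfolding rounding_closed_def
proof (intro allI impI, elim conjE)
  fix r x y x' y'
  assume r: "integer_rounding r" and x': "\<forall>i<m. x' i = r (x i)" and y': "\<forall>j<n. y' j = r (y j)"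
    and "(x, y) \<in> trop_min_tech vrs m n l X Y"
  then obtain t where x: "\<forall>i<m. 0 \<le> x i" and y: "\<forall>j<n. 0 \<le> y j"
    and t: "\<forall>k\<in>{1..l}. t k \<noteq> -\<infinity>" and vrs: "vrs \<longrightarrow> (MIN k\<in>{1..l}. t k) = 0"
    and tx: "\<forall>i<m. (MIN k\<in>{1..l}. t k + ereal (X k i)) \<le> ereal (x i)"
    and ty: "\<forall>j<n. ereal (y j) \<le> (MIN k\<in>{1..l}. t k + ereal (Y k j))"
    unfolding trop_min_tech_def by auto
  let ?\<rho> = "ereal_lift r"
  have K: "finite {1..l}" "{1..l} \<noteq> {}" using l by auto
  have mono: "mono ?\<rho>" using r by (simp add: integer_rounding_def mono_ereal_lift)
  have "vrs \<longrightarrow> (MIN k\<in>{1..l}. ?\<rho> (t k)) = 0"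
    using vrs mono_Min_commute[OF mono, of "t ` {1..l}"] K
    by (auto simp: image_image ereal_lift_zero[OF r])
  moreover have "(MIN k\<in>{1..l}. ?\<rho> (t k) + ereal (X k i)) \<le> ereal (x' i)" if "i < m" for i
  proof -
    have "(MIN k\<in>{1..l}. ?\<rho> (t k) + ereal (X k i)) = ?\<rho> (MIN k\<in>{1..l}. t k + ereal (X k i))"
      using ereal_lift_Min_shift[OF r K] X that by simp
    also have "\<dots> \<le> ?\<rho> (ereal (x i))" using monoD[OF mono tx[rule_format, OF that]] by simp
    finally show ?thesis using x' that by simp
  qed
  moreover have "ereal (y' j) \<le> (MIN k\<in>{1..l}. ?\<rho> (t k) + ereal (Y k j))" if "j < n" for j
  proof -
    have "ereal (y' j) = ?\<rho> (ereal (y j))" using y' that by simp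
    also have "\<dots> \<le> ?\<rho> (MIN k\<in>{1..l}. t k + ereal (Y k j))"
      using monoD[OF mono ty[rule_format, OF that]] .
    also have "\<dots> = (MIN k\<in>{1..l}. ?\<rho> (t k) + ereal (Y k j))"
      using ereal_lift_Min_shift[OF r K] Y that by simp
    finally show ?thesis .
  qed
  ultimately show "(x', y') \<in> trop_min_tech vrs m n l X Y"
    using x y x' y' t integer_rounding_nonneg[OF r] unfolding trop_min_tech_def
    by (auto intro!: exI[of _ "\<lambda>k. ?\<rho> (t k)"])
qed

lemma data_point_in_trop_max_tech:
  assumes "kb \<in> {1..l}" "\<forall>i<m. 0 \<le> X kb i" "\<forall>j<n. 0 \<le> Y kb j"
  shows "(X kb, Y kb) \<in> trop_max_tech vrs m n l X Y"
proof -
  let ?t = "\<lambda>k. if k = kb then 0 else -\<infinity> :: ereal"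
  have "(MAX k\<in>{1..l}. ?t k + ereal (c k)) = ereal (c kb)" for c
    using assms(1) by (intro Max_eqI) auto
  moreover have "(MAX k\<in>{1..l}. ?t k) = 0"
    using assms(1) by (intro Max_eqI) auto
  ultimately show ?thesis
    using assms(2,3) unfolding trop_max_tech_def by (auto split: if_splits intro!: exI[of _ ?t])
qed

lemma data_point_in_trop_min_tech:
  assumes "kb \<in> {1..l}" "\<forall>i<m. 0 \<le> X kb i" "\<forall>j<n. 0 \<le> Y kb j"
  shows "(X kb, Y kb) \<in> trop_min_tech vrs m n l X Y"
proof -
  let ?t = "\<lambda>k. if k = kb then 0 else \<infinity> :: ereal"
  have "(MIN k\<in>{1..l}. ?t k + ereal (c k)) = ereal (c kb)" for c
    using assms(1) by (intro Min_eqI) auto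
  moreover have "(MIN k\<in>{1..l}. ?t k) = 0"
    using assms(1) by (intro Min_eqI) auto
  ultimately show ?thesis
    using assms(2,3) unfolding trop_min_tech_def by (auto split: if_splits intro!: exI[of _ ?t])
qed

lemma trop_max_tech_gain_le:
  assumes xy: "(x, y) \<in> trop_max_tech vrs m n l X Y" and "1 \<le> m" "1 \<le> n" "1 \<le> l"
  shows "y 0 - x 0 \<le> (MAX k\<in>{1..l}. Y k 0 - X k 0)"
proof -
  obtain t where t: "\<forall>k\<in>{1..l}. t k \<noteq> \<infinity>"
    and tx: "(MAX k\<in>{1..l}. t k + ereal (X k 0)) \<le> ereal (x 0)"
    and ty: "ereal (y 0) \<le> (MAX k\<in>{1..l}. t k + ereal (Y k 0))"
    using xy assms(2,3) unfolding trop_max_tech_def by auto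
  have "(MAX k\<in>{1..l}. t k + ereal (Y k 0)) \<in> (\<lambda>k. t k + ereal (Y k 0)) ` {1..l}"
    using assms(4) by (intro Max_in) auto
  then obtain k where k: "k \<in> {1..l}" and "(MAX k\<in>{1..l}. t k + ereal (Y k 0)) = t k + ereal (Y k 0)"
    by auto
  with ty have ty_k: "ereal (y 0) \<le> t k + ereal (Y k 0)" by simp
  have "t k + ereal (X k 0) \<le> (MAX k\<in>{1..l}. t k + ereal (X k 0))"
    using k by (intro Max_ge) auto
  with tx have tx_k: "t k + ereal (X k 0) \<le> ereal (x 0)" by order
  have "y 0 - x 0 \<le> Y k 0 - X k 0"
    using ty_k tx_k t k by (cases "t k") auto
  also have "\<dots> \<le> (MAX k\<in>{1..l}. Y k 0 - X k 0)"
    using k by (intro Max_ge) auto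
  finally show ?thesis .
qed

lemma trop_min_tech_gain_le:
  assumes xy: "(x, y) \<in> trop_min_tech vrs m n l X Y" and "1 \<le> m" "1 \<le> n" "1 \<le> l"
  shows "y 0 - x 0 \<le> (MAX k\<in>{1..l}. Y k 0 - X k 0)"
proof -
  obtain t where t: "\<forall>k\<in>{1..l}. t k \<noteq> -\<infinity>"
    and tx: "(MIN k\<in>{1..l}. t k + ereal (X k 0)) \<le> ereal (x 0)"
    and ty: "ereal (y 0) \<le> (MIN k\<in>{1..l}. t k + ereal (Y k 0))"
    using xy assms(2,3) unfolding trop_min_tech_def by auto
  have "(MIN k\<in>{1..l}. t k + ereal (X k 0)) \<in> (\<lambda>k. t k + ereal (X k 0)) ` {1..l}"
    using assms(4) by (intro Min_in) auto
  then obtain k where k: "k \<in> {1..l}" and "(MIN k\<in>{1..l}. t k + ereal (X k 0)) = t k + ereal (X k 0)"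
    by auto
  with tx have tx_k: "t k + ereal (X k 0) \<le> ereal (x 0)" by simp
  have "(MIN k\<in>{1..l}. t k + ereal (Y k 0)) \<le> t k + ereal (Y k 0)"
    using k by (intro Min_le) auto
  with ty have ty_k: "ereal (y 0) \<le> t k + ereal (Y k 0)" by order
  have "y 0 - x 0 \<le> Y k 0 - X k 0"
    using ty_k tx_k t k by (cases "t k") auto
  also have "\<dots> \<le> (MAX k\<in>{1..l}. Y k 0 - X k 0)"
    using k by (intro Max_ge) auto
  finally show ?thesis .
qed

lemma Sup_ereal_eq_nat_if_ceiling_closed:
  fixes P :: "real \<Rightarrow> bool"
  assumes "P 0" and bounded: "\<And>d. P d \<Longrightarrow> d \<le> B" and ceiling: "\<And>d. P d \<Longrightarrow> P (of_int \<lceil>d\<rceil>)"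
  shows "\<exists>N::nat. Sup {ereal d | d. P d} = ereal (real N)"
proof -
  define Z where "Z = {z::int. 0 \<le> z \<and> P (of_int z)}"
  have "Z \<subseteq> {0..\<lceil>B\<rceil>}"
    using bounded by (auto simp: Z_def) (metis ceiling_mono ceiling_of_int)
  then have "finite Z" by (rule finite_subset) simp
  moreover have "0 \<in> Z" using assms(1) by (simp add: Z_def)
  ultimately have M: "Max Z \<in> Z" "\<And>z. z \<in> Z \<Longrightarrow> z \<le> Max Z" by (auto intro: Max_in)
  have "Sup {ereal d | d. P d} = ereal (of_int (Max Z))"
  proof (rule Sup_eqI)
    fix e assume "e \<in> {ereal d | d. P d}"
    then obtain d where d: "e = ereal d" "P d" by auto
    then have "max 0 \<lceil>d\<rceil> \<in> Z" using assms(1) ceiling by (simp add: Z_def max_def)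
    then have "d \<le> of_int (Max Z)"
      using M(2) by (meson le_of_int_ceiling max.boundedE of_int_le_iff order_trans)
    then show "e \<le> ereal (of_int (Max Z))" using d by simp
  next
    fix e assume "\<And>e'. e' \<in> {ereal d | d. P d} \<Longrightarrow> e' \<le> e"
    moreover have "ereal (of_int (Max Z)) \<in> {ereal d | d. P d}" using M(1) by (auto simp: Z_def)
    ultimately show "ereal (of_int (Max Z)) \<le> e" by blast
  qed
  moreover have "real_of_int (Max Z) = real (nat (Max Z))" using M(1) by (simp add: Z_def)
  ultimately show ?thesis by metis
qed

lemma D_in_nat_if_rounding_closed:
  assumes closed: "rounding_closed m n T" and xy: "(x, y) \<in> T"
    and x: "\<forall>i<m. x i \<in> \<int>" and y: "\<forall>j<n. y j \<in> \<int>"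
    and gain: "\<And>x' y'. (x', y') \<in> T \<Longrightarrow> y' 0 - x' 0 \<le> G"
  shows "\<exists>N::nat. D_in T x y = ereal (real N)"
  unfolding D_in_def
proof (rule Sup_ereal_eq_nat_if_ceiling_closed[where B = "G + x 0 - y 0"])
  show "((\<lambda>i. x i - 0), y) \<in> T" using xy by simp
next
  fix d assume "((\<lambda>i. x i - d), y) \<in> T"
  from gain[OF this] show "d \<le> G + x 0 - y 0" by simp
next
  fix d assume d: "((\<lambda>i. x i - d), y) \<in> T"
  show "((\<lambda>i. x i - of_int \<lceil>d\<rceil>), y) \<in> T"
    by (rule rounding_closedD[OF closed integer_rounding_floor d])
      (use x y in \<open>auto simp: floor_int_diff elim!: Ints_cases\<close>)
qed

lemma D_out_nat_if_rounding_closed: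
  assumes closed: "rounding_closed m n T" and xy: "(x, y) \<in> T"
    and x: "\<forall>i<m. x i \<in> \<int>" and y: "\<forall>j<n. y j \<in> \<int>"
    and gain: "\<And>x' y'. (x', y') \<in> T \<Longrightarrow> y' 0 - x' 0 \<le> G"
  shows "\<exists>N::nat. D_out T x y = ereal (real N)"
  unfolding D_out_def
proof (rule Sup_ereal_eq_nat_if_ceiling_closed[where B = "G + x 0 - y 0"])
  show "(x, (\<lambda>j. y j + 0)) \<in> T" using xy by simp
next
  fix d assume "(x, (\<lambda>j. y j + d)) \<in> T"
  from gain[OF this] show "d \<le> G + x 0 - y 0" by simp
next
  fix d assume d: "(x, (\<lambda>j. y j + d)) \<in> T"
  show "(x, (\<lambda>j. y j + of_int \<lceil>d\<rceil>)) \<in> T"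
    by (rule rounding_closedD[OF closed integer_rounding_ceiling d])
      (use x y in \<open>auto simp: ceiling_int_add elim!: Ints_cases\<close>)
qed

theorem mainTheorem6:
  fixes m n l kb :: nat and X Y :: "nat \<Rightarrow> nat \<Rightarrow> real"
    and T :: "((nat \<Rightarrow> real) \<times> (nat \<Rightarrow> real)) set"
  assumes "m \<ge> 1" and "n \<ge> 1"
    and "\<forall>k\<in>{1..l}. \<forall>i<m. X k i \<in> \<nat>"
    and "\<forall>k\<in>{1..l}. \<forall>j<n. Y k j \<in> \<nat>"
    and "T \<in> {T_max_V m n l X Y, T_max_C m n l X Y, T_min_V m n l X Y, T_min_C m n l X Y}"
    and "kb \<in> {1..l}"
  shows "(\<exists>N::nat. D_in T (X kb) (Y kb) = ereal (real N)) \<and>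
         (\<exists>N::nat. D_out T (X kb) (Y kb) = ereal (real N))"
proof -
  have l: "1 \<le> l" using assms(6) by simp
  have X: "\<forall>k\<in>{1..l}. \<forall>i<m. X k i \<in> \<int>" and Y: "\<forall>k\<in>{1..l}. \<forall>j<n. Y k j \<in> \<int>"
    using assms(3,4) Nats_subset_Ints by blast+
  have nonneg: "\<forall>i<m. 0 \<le> X kb i" "\<forall>j<n. 0 \<le> Y kb j"
    using assms(3,4,6) by (metis Nats_induct of_nat_0_le_iff)+
  obtain vrs where T: "T = trop_max_tech vrs m n l X Y \<or> T = trop_min_tech vrs m n l X Y"
    using assms(5) by blast
  have "rounding_closed m n T"
    using T l X Y by (auto intro: rounding_closed_trop_max_tech rounding_closed_trop_min_tech)
  moreover have "(X kb, Y kb) \<in> T"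
    using T assms(6) nonneg by (auto intro: data_point_in_trop_max_tech data_point_in_trop_min_tech)
  moreover have "y 0 - x 0 \<le> (MAX k\<in>{1..l}. Y k 0 - X k 0)" if "(x, y) \<in> T" for x y
    using T that trop_max_tech_gain_le[OF _ assms(1,2) l] trop_min_tech_gain_le[OF _ assms(1,2) l]
    by blast
  ultimately show ?thesis
    using X Y assms(6) by (auto intro!: D_in_nat_if_rounding_closed D_out_nat_if_rounding_closed)
qed

end
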